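(* Let $n\ge1$, let $E$ be a CM field with maximal totally real subfield $E_0$, $d=[E_0:\mathbb{Q}]$, and let $\sigma_1,\dots,\sigma_d$ be the real embeddings of $E_0$. Let $p_1=n$ and let $p_2,\dots,p_d$ be integers with $0<p_i<n$ and $p_i\equiv n\pmod 2$, indexed so that $p_1\ge p_2\ge\cdots\ge p_d$; set $q_i=2n-p_i$. Choose $\delta_1,\dots,\delta_d\in E_0$ with $\sigma_i(\delta_i)>0$ and $\sigma_i(\delta_j)<0$ for $i\ne j$. Let $U$ be a $2n$-dimensional $E$-vector space with the $E/E_0$-Hermitian form $h$ which in some basis is diagonal with entries: $q_1$ entries $-1$, then for each $1\le i\le d-1$, $(q_{i+1}-q_i)$ entries equal to $(-1)^{i-1}\delta_1\delta_2\cdots\delta_i$, then $p_d$ entries $1$. Let $G=\mathrm{SU}(U,h)$, an algebraic group over $E_0$ acting on $U$ by the standard representation. Then the $G$-representation $\bigwedge^n_E U$ is defined over $E_0$: there exists a $G$-subrepresentation on an $E_0$-vector space $W_0\subseteq\mathrm{Res}_{E/E_0}\big(\bigwedge^n_E U\big)$ such that $W_0\otimes_{E_0}E\cong\bigwedge^n_E U$ as $G$-representations.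
   Context: $\mathrm{Res}_{E/E_0}$ of an $E$-vector space means the same space regarded as an $E_0$-vector space. By construction $h\otimes_{E_0,\sigma_i}\mathbb{R}$ has signature $(p_i,q_i)$. *)

theory Defs
  imports Complex_Main "Jordan_Normal_Form.Determinant" "Jordan_Normal_Form.DL_Submatrix"
begin

(* Number fields are modelled as subfields of the complex numbers. *)

definition subfield_C :: "complex set \<Rightarrow> bool" where
  "subfield_C F \<longleftrightarrow> 0 \<in> F \<and> 1 \<in> F \<and>
     (\<forall>x\<in>F. \<forall>y\<in>F. x + y \<in> F \<and> x - y \<in> F \<and> x * y \<in> F) \<and>
     (\<forall>x\<in>F. x \<noteq> 0 \<longrightarrow> inverse x \<in> F)"

definition span_over :: "complex set \<Rightarrow> complex set \<Rightarrow> complex set" where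
  "span_over K B = {v. \<exists>c. (\<forall>b\<in>B. c b \<in> K) \<and> v = (\<Sum>b\<in>B. c b * b)}"

definition indep_over :: "complex set \<Rightarrow> complex set \<Rightarrow> bool" where
  "indep_over K B \<longleftrightarrow> (\<forall>c. (\<forall>b\<in>B. c b \<in> K) \<and> (\<Sum>b\<in>B. c b * b) = 0 \<longrightarrow> (\<forall>b\<in>B. c b = 0))"

definition ext_degree :: "complex set \<Rightarrow> complex set \<Rightarrow> nat \<Rightarrow> bool" where
  "ext_degree K V d \<longleftrightarrow> (\<exists>B. finite B \<and> B \<subseteq> V \<and> card B = d \<and>
       V = span_over K B \<and> indep_over K B)"

definition number_field :: "complex set \<Rightarrow> bool" where
  "number_field F \<longleftrightarrow> subfield_C F \<and> (\<exists>d. ext_degree \<rat> F d)"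

definition embeddings :: "complex set \<Rightarrow> (complex \<Rightarrow> complex) set" where
  "embeddings F = {\<sigma>. \<sigma> 1 = 1 \<and> (\<forall>x\<in>F. \<forall>y\<in>F. \<sigma> (x + y) = \<sigma> x + \<sigma> y \<and> \<sigma> (x * y) = \<sigma> x * \<sigma> y)
                        \<and> (\<forall>x. x \<notin> F \<longrightarrow> \<sigma> x = 0)}"

definition real_embeddings :: "complex set \<Rightarrow> (complex \<Rightarrow> complex) set" where
  "real_embeddings F = {\<sigma>\<in>embeddings F. \<forall>x\<in>F. \<sigma> x \<in> \<real>}"

definition totally_real :: "complex set \<Rightarrow> bool" where
  "totally_real F \<longleftrightarrow> number_field F \<and> embeddings F = real_embeddings F"

definition totally_imaginary :: "complex set \<Rightarrow> bool" where
  "totally_imaginary F \<longleftrightarrow> number_field F \<and> real_embeddings F = {}"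

definition CM_field :: "complex set \<Rightarrow> bool" where
  "CM_field E \<longleftrightarrow> number_field E \<and> totally_imaginary E \<and>
     (\<exists>F. subfield_C F \<and> F \<subseteq> E \<and> totally_real F \<and> ext_degree F E 2)"

definition max_totally_real_subfield :: "complex set \<Rightarrow> complex set \<Rightarrow> bool" where
  "max_totally_real_subfield E E0 \<longleftrightarrow> subfield_C E0 \<and> E0 \<subseteq> E \<and> totally_real E0 \<and>
     (\<forall>F. subfield_C F \<and> F \<subseteq> E \<and> totally_real F \<longrightarrow> F \<subseteq> E0)"

(* Diagonal entries of the Hermitian form h (0-based index k < 2n):
   q_1 entries -1, then (q_{i+1}-q_i) entries (-1)^(i-1) \<delta>_1...\<delta>_i (1 \<le> i \<le> d-1),
   then p_d entries 1.  Since q is nondecreasing, the block of index k is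
   i = #{j \<in> {1..d}. q_j \<le> k}. *)
definition herm_entry :: "nat \<Rightarrow> (nat \<Rightarrow> nat) \<Rightarrow> (nat \<Rightarrow> complex) \<Rightarrow> nat \<Rightarrow> complex" where
  "herm_entry d q \<delta> k =
     (let i = card {j\<in>{1..d}. q j \<le> k} in
      if i = 0 then -1 else if i \<ge> d then 1 else (-1) ^ (i - 1) * (\<Prod>j=1..i. \<delta> j))"

definition herm_matrix :: "nat \<Rightarrow> nat \<Rightarrow> (nat \<Rightarrow> nat) \<Rightarrow> (nat \<Rightarrow> complex) \<Rightarrow> complex mat" where
  "herm_matrix n d q \<delta> = mat (2*n) (2*n) (\<lambda>(i,j). if i = j then herm_entry d q \<delta> i else 0)"

definition conj_transpose :: "complex mat \<Rightarrow> complex mat" where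
  "conj_transpose g = map_mat cnj (transpose_mat g)"

(* E0-points of SU(U,h), U = E^{2n} with h(x,y) = x^* H y; the involution of E/E0 is
   complex conjugation (E is CM, embedded in \<complex>). *)
definition SU_points :: "complex set \<Rightarrow> nat \<Rightarrow> complex mat \<Rightarrow> complex mat set" where
  "SU_points E m H = {g. g \<in> carrier_mat m m \<and> (\<forall>i<m. \<forall>j<m. g $$ (i,j) \<in> E) \<and>
      det g = 1 \<and> conj_transpose g * H * g = H}"

(* \<Lambda>^n_E (E^{2n}): coordinates indexed by n-subsets of {0..<2n} *)
definition wedge_index :: "nat \<Rightarrow> nat \<Rightarrow> nat set set" where
  "wedge_index m k = {I. I \<subseteq> {..<m} \<and> card I = k}"

definition wedge_space :: "complex set \<Rightarrow> nat \<Rightarrow> nat \<Rightarrow> (nat set \<Rightarrow> complex) set" where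
  "wedge_space E m k = {v. (\<forall>I. v I \<in> E) \<and> (\<forall>I. I \<notin> wedge_index m k \<longrightarrow> v I = 0)}"

definition wedge_act :: "nat \<Rightarrow> nat \<Rightarrow> complex mat \<Rightarrow> (nat set \<Rightarrow> complex) \<Rightarrow> (nat set \<Rightarrow> complex)" where
  "wedge_act m k g v = (\<lambda>I. if I \<in> wedge_index m k
       then (\<Sum>J\<in>wedge_index m k. det (submatrix g I J) * v J) else 0)"

definition vspan_over :: "complex set \<Rightarrow> (nat set \<Rightarrow> complex) set \<Rightarrow> (nat set \<Rightarrow> complex) set" where
  "vspan_over K B = {v. \<exists>c. (\<forall>b\<in>B. c b \<in> K) \<and> v = (\<lambda>I. \<Sum>b\<in>B. c b * b I)}"

definition vindep_over :: "complex set \<Rightarrow> (nat set \<Rightarrow> complex) set \<Rightarrow> bool" where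
  "vindep_over K B \<longleftrightarrow> (\<forall>c. (\<forall>b\<in>B. c b \<in> K) \<and> (\<lambda>I. \<Sum>b\<in>B. c b * b I) = (\<lambda>I. 0)
      \<longrightarrow> (\<forall>b\<in>B. c b = 0))"

end

theory Submission
  imports Defs
begin

text \<open>Write \<open>U = E\<^sup>2\<^sup>n\<close> with \<open>h = diag a\<close>. For \<open>g \<in> SU(U,h)\<close> the inverse of \<open>g\<close> is
  \<open>a\<^sup>-\<^sup>1 g\<^sup>* a\<close> and \<open>det g = 1\<close>, so Jacobi's complementary-minor theorem gives, for \<open>n\<close>-subsets
  \<open>I, J\<close> of \<open>{0..<2n}\<close>,
    \<open>det g[I,J] \<cdot> c\<^sub>J = c\<^sub>I \<cdot> cnj (det g[I\<^sup>c,J\<^sup>c])\<close>,  where \<open>c\<^sub>I = sign(I) \<cdot> \<Prod>s\<notin>I. a s\<close>.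
  Hence the antilinear map \<open>\<tau> v I = C I \<cdot> cnj (v I\<^sup>c)\<close>, \<open>C I = c\<^sub>I / t\<close>, commutes with the action
  on \<open>\<Lambda>\<^sup>n U\<close>. The diagonal entries of \<open>h\<close> make \<open>(-1)\<^sup>n \<Prod>a = t\<^sup>2\<close> a square in \<open>E\<^sub>0\<close> (the first
  \<open>n\<close> entries are \<open>-1\<close>, the remaining ones come in equal pairs because all \<open>q\<^sub>i \<equiv> n mod 2\<close>),
  so \<open>C I \<cdot> C I\<^sup>c = 1\<close> and \<open>\<tau>\<close> is an involution. Its fixed points are \<open>W\<^sub>0\<close>: with \<open>\<xi> \<in> E\<close>
  purely imaginary, the vectors \<open>e\<^sub>I + \<tau> e\<^sub>I\<close> and \<open>\<xi> e\<^sub>I + \<tau> (\<xi> e\<^sub>I)\<close>, for the \<open>I\<close> containing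
  \<open>0\<close>, form an \<open>E\<^sub>0\<close>-basis of \<open>W\<^sub>0\<close> and an \<open>E\<close>-basis of \<open>\<Lambda>\<^sup>n U\<close>.\<close>

section \<open>Closure properties of subfields of \<open>\<complex>\<close>\<close>

lemma subfield_C_zero: "subfield_C F \<Longrightarrow> 0 \<in> F"
  and subfield_C_one: "subfield_C F \<Longrightarrow> 1 \<in> F"
  and subfield_C_add: "subfield_C F \<Longrightarrow> x \<in> F \<Longrightarrow> y \<in> F \<Longrightarrow> x + y \<in> F"
  and subfield_C_diff: "subfield_C F \<Longrightarrow> x \<in> F \<Longrightarrow> y \<in> F \<Longrightarrow> x - y \<in> F"
  and subfield_C_mult: "subfield_C F \<Longrightarrow> x \<in> F \<Longrightarrow> y \<in> F \<Longrightarrow> x * y \<in> F"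
  by (auto simp: subfield_C_def)

lemma subfield_C_inverse: "subfield_C F \<Longrightarrow> x \<in> F \<Longrightarrow> inverse x \<in> F"
  by (cases "x = 0") (auto simp: subfield_C_def)

lemma subfield_C_divide: "subfield_C F \<Longrightarrow> x \<in> F \<Longrightarrow> y \<in> F \<Longrightarrow> x / y \<in> F"
  by (simp add: divide_inverse subfield_C_mult subfield_C_inverse)

lemma subfield_C_uminus: "subfield_C F \<Longrightarrow> x \<in> F \<Longrightarrow> - x \<in> F"
  using subfield_C_diff[of F 0 x] subfield_C_zero[of F] by simp

lemma subfield_C_two: "subfield_C F \<Longrightarrow> 2 \<in> F"
  using subfield_C_add[of F 1 1] subfield_C_one[of F] by simp

lemma subfield_C_sum: "subfield_C F \<Longrightarrow> (\<And>x. x \<in> S \<Longrightarrow> f x \<in> F) \<Longrightarrow> sum f S \<in> F"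
  by (induction S rule: infinite_finite_induct) (auto intro: subfield_C_zero subfield_C_add)

lemma subfield_C_prod: "subfield_C F \<Longrightarrow> (\<And>x. x \<in> S \<Longrightarrow> f x \<in> F) \<Longrightarrow> prod f S \<in> F"
  by (induction S rule: infinite_finite_induct) (auto intro: subfield_C_one subfield_C_mult)

lemma subfield_C_power: "subfield_C F \<Longrightarrow> x \<in> F \<Longrightarrow> x ^ j \<in> F"
  by (induction j) (auto intro: subfield_C_one subfield_C_mult)

lemma subfield_C_signof: "subfield_C F \<Longrightarrow> (signof p :: complex) \<in> F"
  using subfield_C_one[of F] subfield_C_uminus[of F 1] by (cases p rule: sign_cases) auto

lemma subfield_C_det:
  assumes F: "subfield_C F" and A: "A \<in> carrier_mat n n"
    and entries: "\<And>i j. i < n \<Longrightarrow> j < n \<Longrightarrow> A $$ (i,j) \<in> F"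
  shows "det A \<in> F"
  unfolding det_def'[OF A]
  by (intro subfield_C_sum[OF F] subfield_C_mult[OF F] subfield_C_signof[OF F] subfield_C_prod[OF F])
     (auto intro!: entries simp: permutes_in_image)

section \<open>Jacobi's complementary minor theorem\<close>

lemma index_mult_mat_sum:
  assumes "A \<in> carrier_mat n n" "B \<in> carrier_mat n n" "i < n" "j < n"
  shows "(A * B) $$ (i,j) = (\<Sum>k<n. A $$ (i,k) * B $$ (k,j))"
  using assms by (simp add: scalar_prod_def lessThan_atLeast0 mult.commute)

lemma det_leading_block_of_inverse:
  fixes M N :: "'a::field mat"
  assumes M: "M \<in> carrier_mat (n+m) (n+m)" and N: "N \<in> carrier_mat (n+m) (n+m)"
    and MN: "M * N = 1\<^sub>m (n+m)"
  shows "det (mat n n (\<lambda>(i,j). M$$(i,j))) = det M * det (mat m m (\<lambda>(i,j). N$$(n+i,n+j)))"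
proof -
  define T where "T = four_block_mat (1\<^sub>m n) (mat n m (\<lambda>(i,j). N$$(i,n+j))) (0\<^sub>m m n)
    (mat m m (\<lambda>(i,j). N$$(n+i,n+j)))"
  define L where "L = four_block_mat (mat n n (\<lambda>(i,j). M$$(i,j))) (0\<^sub>m n m)
    (mat m n (\<lambda>(i,j). M$$(n+i,j))) (1\<^sub>m m)"
  have T: "T \<in> carrier_mat (n+m) (n+m)" unfolding T_def by auto
  have MT: "M * T = L"
  proof (rule eq_matI)
    fix i j assume "i < dim_row L" "j < dim_col L"
    then have i: "i < n+m" and j: "j < n+m" by (auto simp: L_def)
    have "(M * T) $$ (i,j) = (\<Sum>k<n+m. M $$ (i,k) * T $$ (k,j))"
      by (rule index_mult_mat_sum[OF M T i j])
    also have "\<dots> = L $$ (i,j)"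
    proof (cases "j < n")
      case True
      have "(\<Sum>k<n+m. M $$ (i,k) * T $$ (k,j)) = (\<Sum>k<n+m. if k = j then M $$ (i,k) else 0)"
        by (rule sum.cong) (use True in \<open>auto simp: T_def\<close>)
      then show ?thesis using True i by (simp add: L_def)
    next
      case False
      have "(\<Sum>k<n+m. M $$ (i,k) * T $$ (k,j)) = (\<Sum>k<n+m. M $$ (i,k) * N $$ (k,j))"
        by (rule sum.cong) (use False j in \<open>auto simp: T_def\<close>)
      also have "\<dots> = (M * N) $$ (i,j)" by (rule index_mult_mat_sum[OF M N i j, symmetric])
      finally show ?thesis using MN False i j by (auto simp: L_def)
    qed
    finally show "(M * T) $$ (i,j) = L $$ (i,j)" .
  qed (use M T in \<open>auto simp: L_def\<close>)
  have "det L = det (mat n n (\<lambda>(i,j). M$$(i,j)))"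
    unfolding L_def by (subst det_four_block_mat_upper_right_zero) auto
  moreover have "det T = det (mat m m (\<lambda>(i,j). N$$(n+i,n+j)))"
    unfolding T_def by (subst det_four_block_mat_lower_left_zero) auto
  ultimately show ?thesis using det_mult[OF M T] MT by simp
qed

definition index_compl :: "nat \<Rightarrow> nat set \<Rightarrow> nat set" where
  "index_compl m I = {..<m} - I"

definition shuffle_perm :: "nat \<Rightarrow> nat \<Rightarrow> nat set \<Rightarrow> nat \<Rightarrow> nat" where
  "shuffle_perm m k I x =
     (if x < k then pick I x else if x < m then pick (index_compl m I) (x - k) else x)"

lemma finite_index_compl: "finite (index_compl m I)"
  by (simp add: index_compl_def)

lemma card_index_compl: "I \<subseteq> {..<m} \<Longrightarrow> card (index_compl m I) = m - card I"
  unfolding index_compl_def by (simp add: card_Diff_subset finite_subset)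

lemma index_compl_index_compl: "I \<subseteq> {..<m} \<Longrightarrow> index_compl m (index_compl m I) = I"
  unfolding index_compl_def by auto

lemma bounded_Collect_eq: "I \<subseteq> {..<m} \<Longrightarrow> {i. i < m \<and> i \<in> I} = I"
  by auto

lemma shuffle_perm_permutes:
  assumes I: "I \<subseteq> {..<m}" "card I = k" "k \<le> m"
  shows "shuffle_perm m k I permutes {0..<m}"
proof -
  let ?p = "shuffle_perm m k I"
  have card_compl: "card (index_compl m I) = m - k" using card_index_compl[OF I(1)] I(2) by simp
  have in_I: "?p x \<in> I" if "x < k" for x
    using pick_in_set[of x I] I that by (simp add: shuffle_perm_def)
  have in_compl: "?p x \<in> index_compl m I" if "k \<le> x" "x < m" for x
  proof -
    have "x - k < card (index_compl m I)" using card_compl that by linarith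
    then show ?thesis using pick_in_set[of "x-k" "index_compl m I"] that by (simp add: shuffle_perm_def)
  qed
  have maps_to: "?p ` {0..<m} \<subseteq> {0..<m}"
  proof (rule image_subsetI)
    fix x assume x: "x \<in> {0..<m}"
    show "?p x \<in> {0..<m}"
    proof (cases "x < k")
      case True then show ?thesis using in_I I(1) by auto
    next
      case False then show ?thesis using in_compl[of x] x by (auto simp: index_compl_def)
    qed
  qed
  have inj: "inj_on ?p {0..<m}"
  proof (rule inj_onI)
    fix x y assume x: "x \<in> {0..<m}" and y: "y \<in> {0..<m}" and eq: "?p x = ?p y"
    consider "x < k" "y < k" | "x < k" "\<not> y < k" | "\<not> x < k" "y < k" | "\<not> x < k" "\<not> y < k"
      by blast
    then show "x = y"
    proof cases
      case 1
      then show ?thesis using eq pick_mono[of _ I] I(2)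
        by (simp add: shuffle_perm_def) (metis linorder_neqE_nat less_irrefl)
    next
      case 2
      then show ?thesis using eq in_I[of x] in_compl[of y] y by (auto simp: index_compl_def)
    next
      case 3
      then show ?thesis using eq in_I[of y] in_compl[of x] x by (auto simp: index_compl_def)
    next
      case 4
      have "x - k < card (index_compl m I)" "y - k < card (index_compl m I)"
        using 4 x y card_compl by auto
      then have "x - k = y - k" using eq 4 x y pick_mono[of _ "index_compl m I"]
        by (simp add: shuffle_perm_def) (metis linorder_neqE_nat less_irrefl)
      then show ?thesis using 4 by simp
    qed
  qed
  have "?p ` {0..<m} = {0..<m}" by (rule endo_inj_surj[OF _ maps_to inj]) simp
  then have "bij_betw ?p {0..<m} {0..<m}" using inj by (simp add: bij_betw_def)
  then show ?thesis by (rule bij_imp_permutes) (use I(3) in \<open>simp add: shuffle_perm_def\<close>)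
qed

lemma det_permute_rows_cols:
  fixes A :: "'a::comm_ring_1 mat"
  assumes A: "A \<in> carrier_mat m m" and p: "p permutes {0..<m}" and q: "q permutes {0..<m}"
  shows "det (mat m m (\<lambda>(i,j). A $$ (p i, q j))) = signof p * signof q * det A"
proof -
  have q_less: "q i < m" if "i < m" for i using permutes_in_image[OF q] that by auto
  let ?B = "mat m m (\<lambda>(i,j). A $$ (p i, j))"
  have B: "?B \<in> carrier_mat m m" by simp
  have "mat m m (\<lambda>(i,j). A $$ (p i, q j))
      = transpose_mat (mat m m (\<lambda>(i,j). (transpose_mat ?B) $$ (q i, j)))"
    by (rule eq_matI) (auto simp: q_less)
  then have "det (mat m m (\<lambda>(i,j). A $$ (p i, q j)))
      = det (mat m m (\<lambda>(i,j). (transpose_mat ?B) $$ (q i, j)))"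
    by (metis det_transpose carrier_matI dim_row_mat dim_col_mat)
  also have "\<dots> = signof q * det (transpose_mat ?B)" by (rule det_permute_rows[OF _ q]) simp
  also have "\<dots> = signof q * det ?B" by (simp add: det_transpose[OF B])
  also have "det ?B = signof p * det A" by (rule det_permute_rows[OF A p])
  finally show ?thesis by simp
qed

lemma carrier_submatrix:
  assumes "A \<in> carrier_mat m m" "I \<subseteq> {..<m}" "J \<subseteq> {..<m}"
  shows "submatrix A I J \<in> carrier_mat (card I) (card J)"
  using assms by (simp add: submatrix_def bounded_Collect_eq)

lemma jacobi_complementary_minor:
  fixes A K :: "'a::field mat"
  assumes A: "A \<in> carrier_mat (k+l) (k+l)" and K: "K \<in> carrier_mat (k+l) (k+l)"
    and AK: "A * K = 1\<^sub>m (k+l)"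
    and I: "I \<subseteq> {..<k+l}" "card I = k" and J: "J \<subseteq> {..<k+l}" "card J = k"
  shows "det (submatrix A I J) = signof (shuffle_perm (k+l) k I) * signof (shuffle_perm (k+l) k J)
           * det A * det (submatrix K (index_compl (k+l) J) (index_compl (k+l) I))"
proof -
  let ?m = "k+l" and ?pI = "shuffle_perm (k+l) k I" and ?pJ = "shuffle_perm (k+l) k J"
  have pI: "?pI permutes {0..<?m}" and pJ: "?pJ permutes {0..<?m}"
    using shuffle_perm_permutes I J by auto
  have pI_less: "?pI i < ?m" if "i < ?m" for i using permutes_in_image[OF pI] that by auto
  define A' where "A' = mat ?m ?m (\<lambda>(i,j). A $$ (?pI i, ?pJ j))"
  define K' where "K' = mat ?m ?m (\<lambda>(i,j). K $$ (?pJ i, ?pI j))"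
  have A': "A' \<in> carrier_mat ?m ?m" and K': "K' \<in> carrier_mat ?m ?m" by (auto simp: A'_def K'_def)
  have "A' * K' = 1\<^sub>m ?m"
  proof (rule eq_matI)
    fix i j assume "i < dim_row (1\<^sub>m ?m)" "j < dim_col (1\<^sub>m ?m)"
    then have i: "i < ?m" and j: "j < ?m" by auto
    have "(A' * K') $$ (i,j) = (\<Sum>r<?m. A $$ (?pI i, ?pJ r) * K $$ (?pJ r, ?pI j))"
      unfolding index_mult_mat_sum[OF A' K' i j] by (rule sum.cong) (auto simp: A'_def K'_def i j)
    also have "\<dots> = (\<Sum>s<?m. A $$ (?pI i, s) * K $$ (s, ?pI j))"
      using sum.reindex_bij_betw[OF permutes_imp_bij[OF pJ], of "\<lambda>s. A $$ (?pI i, s) * K $$ (s, ?pI j)"]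
      by (simp add: lessThan_atLeast0)
    also have "\<dots> = (A * K) $$ (?pI i, ?pI j)"
      by (rule index_mult_mat_sum[OF A K pI_less[OF i] pI_less[OF j], symmetric])
    also have "\<dots> = (if i = j then 1 else 0)"
      using AK pI_less[OF i] pI_less[OF j] permutes_inj[OF pI] by (simp add: inj_eq)
    finally show "(A' * K') $$ (i,j) = 1\<^sub>m ?m $$ (i,j)" using i j by simp
  qed (auto simp: A'_def K'_def)
  then have "det (mat k k (\<lambda>(i,j). A'$$(i,j))) = det A' * det (mat l l (\<lambda>(i,j). K'$$(k+i,k+j)))"
    by (rule det_leading_block_of_inverse[OF A' K'])
  moreover have "submatrix A I J = mat k k (\<lambda>(i,j). A'$$(i,j))"
    unfolding submatrix_def using A I J
    by (intro eq_matI) (auto simp: A'_def shuffle_perm_def bounded_Collect_eq)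
  moreover have "submatrix K (index_compl ?m J) (index_compl ?m I) = mat l l (\<lambda>(i,j). K'$$(k+i,k+j))"
  proof -
    have "index_compl ?m I \<subseteq> {..<?m}" "index_compl ?m J \<subseteq> {..<?m}"
      by (auto simp: index_compl_def)
    then show ?thesis
      unfolding submatrix_def using K card_index_compl[OF I(1)] card_index_compl[OF J(1)] I(2) J(2)
      by (intro eq_matI) (auto simp: K'_def shuffle_perm_def bounded_Collect_eq)
  qed
  moreover have "det A' = signof ?pI * signof ?pJ * det A"
    unfolding A'_def by (rule det_permute_rows_cols[OF A pI pJ])
  ultimately show ?thesis by simp
qed

section \<open>Minors of matrices preserving a diagonal Hermitian form\<close>

lemma bij_betw_pick: "finite S \<Longrightarrow> card S = n \<Longrightarrow> bij_betw (pick S) {..<n} S"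
proof -
  assume S: "finite S" "card S = n"
  have inj: "inj_on (pick S) {..<n}"
    by (rule inj_onI) (metis S(2) lessThan_iff linorder_neqE_nat pick_mono less_irrefl)
  have sub: "pick S ` {..<n} \<subseteq> S" using pick_in_set S by auto
  have "card (pick S ` {..<n}) = card S" using card_image[OF inj] S by simp
  then have "pick S ` {..<n} = S" using card_subset_eq[OF S(1) sub] by simp
  then show ?thesis using inj by (simp add: bij_betw_def)
qed

lemma prod_pick: "finite S \<Longrightarrow> card S = n \<Longrightarrow> (\<Prod>i<n. f (pick S i)) = (\<Prod>s\<in>S. f s)"
  using prod.reindex_bij_betw[OF bij_betw_pick] by simp

lemma cnj_det: "B \<in> carrier_mat n n \<Longrightarrow> cnj (det B) = det (map_mat cnj B)"
  by (simp add: det_def' cnj_sum permutes_in_image)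

lemma det_scaled_cnj_transpose:
  assumes B: "B \<in> carrier_mat n n"
  shows "det (mat n n (\<lambda>(i,j). x i * cnj (B$$(j,i)) * y j))
           = (\<Prod>i<n. x i) * (\<Prod>i<n. y i) * cnj (det B)"
proof -
  let ?D = "map_mat cnj (transpose_mat B)"
  have D: "?D \<in> carrier_mat n n" using B by simp
  have "mat n n (\<lambda>(i,j). x i * cnj (B$$(j,i)) * y j)
        = mat n n (\<lambda>(i,j). x i * ?D $$ (i,j) * y j)"
    using B by (intro eq_matI) auto
  also have "det \<dots> = (\<Prod>i<n. x i) * (\<Prod>i<n. y i) * det ?D"
  proof -
    have "det (mat n n (\<lambda>(i,j). x i * ?D $$ (i,j) * y j))
        = (\<Sum>p | p permutes {0..<n}. signof p * (\<Prod>i=0..<n. x i * ?D $$ (i, p i) * y (p i)))"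
      by (subst det_def'[of _ n]) (auto intro!: sum.cong prod.cong simp: permutes_in_image)
    also have "\<dots> = (\<Sum>p | p permutes {0..<n}.
        (\<Prod>i<n. x i) * (\<Prod>i<n. y i) * (signof p * (\<Prod>i=0..<n. ?D $$ (i, p i))))"
    proof (rule sum.cong[OF refl])
      fix p assume "p \<in> {p. p permutes {0..<n}}"
      then have "(\<Prod>i=0..<n. y (p i)) = (\<Prod>i=0..<n. y i)"
        using prod.reindex_bij_betw[OF permutes_imp_bij, of p "{0..<n}" y] by simp
      then show "signof p * (\<Prod>i=0..<n. x i * ?D $$ (i, p i) * y (p i))
          = (\<Prod>i<n. x i) * (\<Prod>i<n. y i) * (signof p * (\<Prod>i=0..<n. ?D $$ (i, p i)))"
        by (simp add: prod.distrib lessThan_atLeast0)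
    qed
    also have "\<dots> = (\<Prod>i<n. x i) * (\<Prod>i<n. y i) * det ?D"
      by (simp add: det_def'[OF D] sum_distrib_left)
    finally show ?thesis .
  qed
  also have "det ?D = cnj (det B)"
    using cnj_det[of "transpose_mat B" n] B by (simp add: det_transpose)
  finally show ?thesis .
qed

definition diag_mat_of :: "nat \<Rightarrow> (nat \<Rightarrow> complex) \<Rightarrow> complex mat" where
  "diag_mat_of m a = mat m m (\<lambda>(i,j). if i = j then a i else 0)"

definition hodge_coeff :: "nat \<Rightarrow> nat \<Rightarrow> (nat \<Rightarrow> complex) \<Rightarrow> nat set \<Rightarrow> complex" where
  "hodge_coeff m k a I = signof (shuffle_perm m k I) * (\<Prod>s\<in>index_compl m I. a s)"

lemma inverse_of_diag_unitary:
  fixes g :: "complex mat"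
  assumes g: "g \<in> carrier_mat m m" and a: "\<And>s. s < m \<Longrightarrow> a s \<noteq> 0"
    and unitary: "conj_transpose g * diag_mat_of m a * g = diag_mat_of m a"
  shows "g * mat m m (\<lambda>(r,s). cnj (g$$(s,r)) * a s / a r) = 1\<^sub>m m"
proof -
  define K where "K = mat m m (\<lambda>(r,s). cnj (g$$(s,r)) * a s / a r)"
  have K: "K \<in> carrier_mat m m" by (simp add: K_def)
  have H: "diag_mat_of m a \<in> carrier_mat m m" by (simp add: diag_mat_of_def)
  have G: "conj_transpose g \<in> carrier_mat m m" using g by (simp add: conj_transpose_def)
  have "K * g = 1\<^sub>m m"
  proof (rule eq_matI)
    fix r s assume "r < dim_row (1\<^sub>m m)" "s < dim_col (1\<^sub>m m)"
    then have r: "r < m" and s: "s < m" by auto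
    have GH: "(conj_transpose g * diag_mat_of m a) $$ (r,t) = cnj (g$$(t,r)) * a t" if t: "t < m" for t
    proof -
      have "(conj_transpose g * diag_mat_of m a) $$ (r,t)
          = (\<Sum>u<m. if u = t then cnj (g$$(t,r)) * a t else 0)"
        unfolding index_mult_mat_sum[OF G H r t]
        by (rule sum.cong) (use t r g in \<open>auto simp: conj_transpose_def diag_mat_of_def\<close>)
      then show ?thesis using t by simp
    qed
    have "(\<Sum>t<m. cnj (g$$(t,r)) * a t * g $$ (t,s)) = (conj_transpose g * diag_mat_of m a * g) $$ (r,s)"
      unfolding index_mult_mat_sum[OF mult_carrier_mat[OF G H] g r s] by (simp add: GH)
    also have "\<dots> = (if r = s then a r else 0)" using unitary r s by (simp add: diag_mat_of_def)
    finally have "(\<Sum>t<m. cnj (g$$(t,r)) * a t * g $$ (t,s)) = (if r = s then a r else 0)" .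
    then show "(K * g) $$ (r,s) = 1\<^sub>m m $$ (r,s)"
      unfolding index_mult_mat_sum[OF K g r s] using a[OF r] a[OF s] r s
      by (simp add: K_def sum_divide_distrib[symmetric])
  qed (use g in \<open>auto simp: K_def\<close>)
  then show ?thesis unfolding K_def[symmetric] by (rule mat_mult_left_right_inverse[OF K g])
qed

lemma diag_unitary_minor_identity:
  fixes g :: "complex mat" and a :: "nat \<Rightarrow> complex"
  assumes g: "g \<in> carrier_mat (k+k) (k+k)" and det_g: "det g = 1"
    and a: "\<And>s. s < k+k \<Longrightarrow> a s \<noteq> 0"
    and unitary: "conj_transpose g * diag_mat_of (k+k) a * g = diag_mat_of (k+k) a"
    and I: "I \<subseteq> {..<k+k}" "card I = k" and J: "J \<subseteq> {..<k+k}" "card J = k"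
  shows "det (submatrix g I J) * hodge_coeff (k+k) k a J
           = hodge_coeff (k+k) k a I * cnj (det (submatrix g (index_compl (k+k) I) (index_compl (k+k) J)))"
proof -
  let ?m = "k+k" and ?I' = "index_compl (k+k) I" and ?J' = "index_compl (k+k) J"
  define K where "K = mat ?m ?m (\<lambda>(r,s). cnj (g$$(s,r)) * a s / a r)"
  have K: "K \<in> carrier_mat ?m ?m" by (simp add: K_def)
  have cards: "card ?I' = k" "card ?J' = k"
    using card_index_compl[OF I(1)] card_index_compl[OF J(1)] I(2) J(2) by auto
  have compl_sub: "?I' \<subseteq> {..<?m}" "?J' \<subseteq> {..<?m}" by (auto simp: index_compl_def)
  let ?B = "submatrix g ?I' ?J'"
  have B: "?B \<in> carrier_mat k k" using carrier_submatrix[OF g compl_sub] cards by simp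
  have "submatrix K ?J' ?I' = mat k k (\<lambda>(i,j). (1 / a (pick ?J' i)) * cnj (?B$$(j,i)) * a (pick ?I' j))"
  proof -
    have "pick ?J' i < ?m \<and> pick ?I' i < ?m" if "i < k" for i
      using pick_in_set[of i ?J'] pick_in_set[of i ?I'] cards compl_sub that by auto
    then show ?thesis unfolding submatrix_def using g cards compl_sub
      by (intro eq_matI) (auto simp: K_def bounded_Collect_eq)
  qed
  then have "det (submatrix K ?J' ?I')
      = (\<Prod>i<k. 1 / a (pick ?J' i)) * (\<Prod>i<k. a (pick ?I' i)) * cnj (det ?B)"
    by (simp only: det_scaled_cnj_transpose[OF B])
  also have "\<dots> = (\<Prod>s\<in>?J'. 1 / a s) * (\<Prod>s\<in>?I'. a s) * cnj (det ?B)"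
    using prod_pick[OF finite_index_compl cards(1), of a]
      prod_pick[OF finite_index_compl cards(2), of "\<lambda>s. 1 / a s"] by simp
  finally have det_K: "det (submatrix K ?J' ?I') = (\<Prod>s\<in>?J'. 1 / a s) * (\<Prod>s\<in>?I'. a s) * cnj (det ?B)" .
  have "det (submatrix g I J) = signof (shuffle_perm ?m k I) * signof (shuffle_perm ?m k J)
        * det (submatrix K ?J' ?I')"
    using jacobi_complementary_minor[OF g K _ I J] inverse_of_diag_unitary[OF g a unitary] det_g
    by (simp add: K_def)
  moreover have "(\<Prod>s\<in>?J'. 1 / a s) * (\<Prod>s\<in>?J'. a s) = 1"
  proof -
    have "(\<Prod>s\<in>?J'. 1 / a s) * (\<Prod>s\<in>?J'. a s) = (\<Prod>s\<in>?J'. 1 / a s * a s)"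
      by (rule prod.distrib[symmetric])
    also have "\<dots> = 1" using a compl_sub by (intro prod.neutral) auto
    finally show ?thesis .
  qed
  moreover have "(signof (shuffle_perm ?m k J) :: complex) * signof (shuffle_perm ?m k J) = 1"
    by (metis of_int_mult of_int_1 sign_idempotent)
  ultimately show ?thesis
    unfolding hodge_coeff_def det_K by (simp add: algebra_simps) (metis mult.assoc mult_1)
qed

definition swap_prefix_perm :: "nat \<Rightarrow> nat \<Rightarrow> nat \<Rightarrow> nat" where
  "swap_prefix_perm k j x = (if x < j then x + k else if k \<le> x \<and> x < k + j then x - k else x)"

lemma swap_prefix_perm_sign: "j \<le> k \<Longrightarrow> permutation (swap_prefix_perm k j) \<and> sign (swap_prefix_perm k j) = (-1)^j"
proof (induction j)
  case 0
  have "swap_prefix_perm k 0 = id" by (rule ext) (simp add: swap_prefix_perm_def)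
  then show ?case by simp
next
  case (Suc j)
  then have IH: "permutation (swap_prefix_perm k j)" "sign (swap_prefix_perm k j) = (-1)^j" by auto
  have step: "swap_prefix_perm k (Suc j) = swap_prefix_perm k j \<circ> Transposition.transpose j (j+k)"
    using Suc.prems by (intro ext) (auto simp: swap_prefix_perm_def Transposition.transpose_def)
  have "permutation (swap_prefix_perm k (Suc j))"
    unfolding step by (rule permutation_compose[OF IH(1) permutation_swap_id])
  moreover have "sign (swap_prefix_perm k (Suc j)) = (-1)^Suc j"
    unfolding step using sign_compose[OF IH(1) permutation_swap_id] IH(2) Suc.prems
    by (simp add: sign_swap_id)
  ultimately show ?case ..
qed

lemma shuffle_perm_index_compl:
  "I \<subseteq> {..<k+k} \<Longrightarrow> shuffle_perm (k+k) k (index_compl (k+k) I) = shuffle_perm (k+k) k I \<circ> swap_prefix_perm k k"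
  by (rule ext) (auto simp: shuffle_perm_def swap_prefix_perm_def index_compl_index_compl)

lemma hodge_coeff_mult_compl:
  assumes I: "I \<subseteq> {..<k+k}" "card I = k"
  shows "hodge_coeff (k+k) k a I * hodge_coeff (k+k) k a (index_compl (k+k) I) = (-1)^k * (\<Prod>s<k+k. a s)"
proof -
  let ?p = "shuffle_perm (k+k) k I"
  have p: "permutation ?p"
    using shuffle_perm_permutes[OF I] permutes_imp_permutation by auto
  have swap: "permutation (swap_prefix_perm k k)" "sign (swap_prefix_perm k k) = (-1)^k"
    using swap_prefix_perm_sign[of k k] by auto
  have sign_compl: "sign (shuffle_perm (k+k) k (index_compl (k+k) I)) = sign ?p * (-1)^k"
    unfolding shuffle_perm_index_compl[OF I(1)] sign_compose[OF p swap(1)] swap(2) ..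
  have "(signof ?p :: complex) * signof ?p = 1"
    by (metis of_int_mult of_int_1 sign_idempotent)
  moreover have "(\<Prod>s\<in>index_compl (k+k) I. a s) * (\<Prod>s\<in>I. a s) = (\<Prod>s<k+k. a s)"
  proof -
    have "{..<k+k} = index_compl (k+k) I \<union> I" "index_compl (k+k) I \<inter> I = {}"
      using I(1) by (auto simp: index_compl_def)
    then show ?thesis by (metis finite_lessThan finite_Un prod.union_disjoint)
  qed
  ultimately show ?thesis
    unfolding hodge_coeff_def index_compl_index_compl[OF I(1)] sign_compl by (simp add: algebra_simps)
qed

section \<open>An \<open>E\<^sub>0\<close>-structure on \<open>\<Lambda>\<^sup>k E\<^sup>2\<^sup>k\<close>\<close>

locale wedge_descent =
  fixes E E0 :: "complex set" and xi :: complex and k :: nat and a :: "nat \<Rightarrow> complex"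
    and t :: complex
  assumes subfield_E: "subfield_C E" and subfield_E0: "subfield_C E0"
    and E0_sub_E: "E0 \<subseteq> E" and E0_real: "E0 \<subseteq> \<real>"
    and xi_in_E: "xi \<in> E" and Re_xi: "Re xi = 0" and xi_nonzero: "xi \<noteq> 0"
    and E_decompose: "\<And>x. x \<in> E \<Longrightarrow> \<exists>\<alpha>\<in>E0. \<exists>\<beta>\<in>E0. x = \<alpha> + \<beta> * xi"
    and k_pos: "k \<ge> 1"
    and a_in_E0: "\<And>s. s < k+k \<Longrightarrow> a s \<in> E0" and a_nonzero: "\<And>s. s < k+k \<Longrightarrow> a s \<noteq> 0"
    and t_in_E0: "t \<in> E0" and t_nonzero: "t \<noteq> 0"
    and signed_prod_a: "(-1)^k * (\<Prod>s<k+k. a s) = t^2"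
begin

abbreviation "m \<equiv> k+k"
abbreviation "WI \<equiv> wedge_index m k"
abbreviation "compl \<equiv> index_compl m"

definition "C I = hodge_coeff m k a I / t"

definition "tau v = (\<lambda>I. if I \<in> WI then C I * cnj (v (compl I)) else 0)"

text \<open>Each pair \<open>{I, I\<^sup>c}\<close> of index sets has exactly one member containing \<open>0\<close>.\<close>
definition "R = {I \<in> WI. 0 \<in> I}"

definition "basis_vec = (\<lambda>(J, b) I. if I = J then (if b then 1 else xi)
    else if I = compl J then C I * cnj (if b then 1 else xi) else 0)"

definition "B = basis_vec ` (R \<times> UNIV)"

definition "coords_vec \<alpha> \<beta> =
  (\<lambda>I. \<Sum>J\<in>R. \<alpha> J * basis_vec (J,True) I + \<beta> J * basis_vec (J,False) I)"

lemma cnj_E0: "x \<in> E0 \<Longrightarrow> cnj x = x"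
  using E0_real by (metis Reals_cnj_iff subsetD)

lemma cnj_xi: "cnj xi = - xi"
  using Re_xi by (simp add: complex_eq_iff)

lemma cnj_in_E: "x \<in> E \<Longrightarrow> cnj x \<in> E"
proof -
  assume "x \<in> E"
  then obtain \<alpha> \<beta> where "\<alpha> \<in> E0" "\<beta> \<in> E0" "x = \<alpha> + \<beta> * xi" using E_decompose by blast
  then show ?thesis
    using cnj_E0 cnj_xi E0_sub_E xi_in_E
    by (auto intro!: subfield_C_diff[OF subfield_E] subfield_C_mult[OF subfield_E])
qed

lemma WI_sub: "I \<in> WI \<Longrightarrow> I \<subseteq> {..<m}" and WI_card: "I \<in> WI \<Longrightarrow> card I = k"
  by (auto simp: wedge_index_def)

lemma compl_in_WI: "I \<in> WI \<Longrightarrow> compl I \<in> WI"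
  unfolding wedge_index_def using card_index_compl[of I m] by (auto simp: index_compl_def)

lemma compl_compl: "I \<in> WI \<Longrightarrow> compl (compl I) = I"
  using index_compl_index_compl WI_sub by blast

lemma finite_WI: "finite WI"
proof -
  have "WI \<subseteq> Pow {..<m}" by (auto simp: wedge_index_def)
  then show ?thesis by (rule finite_subset) simp
qed

lemma R_sub_WI: "R \<subseteq> WI"
  unfolding R_def by auto

lemma finite_R: "finite R"
  using finite_WI R_sub_WI finite_subset by blast

lemma in_R_or_compl_in_R: "I \<in> WI \<Longrightarrow> I \<in> R \<or> compl I \<in> R"
  unfolding R_def using compl_in_WI k_pos by (auto simp: index_compl_def)

lemma compl_notin_R: "I \<in> R \<Longrightarrow> compl I \<notin> R"
  unfolding R_def by (auto simp: index_compl_def)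

lemma C_in_E0: "C I \<in> E0"
  unfolding C_def hodge_coeff_def
  by (intro subfield_C_divide[OF subfield_E0] subfield_C_mult[OF subfield_E0]
      subfield_C_signof[OF subfield_E0] subfield_C_prod[OF subfield_E0] t_in_E0)
     (auto simp: index_compl_def intro: a_in_E0)

lemma C_mult_compl: "I \<in> WI \<Longrightarrow> C I * C (compl I) = 1"
  unfolding C_def using hodge_coeff_mult_compl[OF WI_sub WI_card, of I a] signed_prod_a t_nonzero
  by (simp add: power2_eq_square)

lemma C_nonzero: "I \<in> WI \<Longrightarrow> C I \<noteq> 0"
  using C_mult_compl by fastforce

lemma wedge_vec_eqI:
  assumes "\<And>I. I \<notin> WI \<Longrightarrow> v I = 0" "\<And>I. I \<notin> WI \<Longrightarrow> w I = 0"
    and "\<And>J. J \<in> R \<Longrightarrow> v J = w J" "\<And>J. J \<in> R \<Longrightarrow> v (compl J) = w (compl J)"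
  shows "v = w"
proof
  fix I
  show "v I = w I"
  proof (cases "I \<in> WI")
    case True
    then consider "I \<in> R" | "compl I \<in> R" using in_R_or_compl_in_R by blast
    then show ?thesis
    proof cases
      case 2
      then show ?thesis using assms(4)[OF 2] compl_compl[OF True] by simp
    qed (rule assms(3))
  qed (simp add: assms(1,2))
qed

lemma basis_vec_at_R:
  "I \<in> R \<Longrightarrow> J \<in> R \<Longrightarrow> basis_vec (J,b) I = (if I = J then (if b then 1 else xi) else 0)"
  using compl_notin_R by (auto simp: basis_vec_def)

lemma basis_vec_at_compl:
  assumes "I \<in> R" "J \<in> R"
  shows "basis_vec (J,b) (compl I) = (if I = J then C (compl I) * cnj (if b then 1 else xi) else 0)"
proof -
  have "compl I \<noteq> J" using compl_notin_R assms by auto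
  moreover have "compl I = compl J \<longleftrightarrow> I = J"
    using compl_compl R_sub_WI assms by (metis subsetD)
  ultimately show ?thesis by (simp add: basis_vec_def)
qed

lemma basis_vec_outside: "I \<notin> WI \<Longrightarrow> J \<in> R \<Longrightarrow> basis_vec (J,b) I = 0"
  using R_sub_WI compl_in_WI by (auto simp: basis_vec_def)

lemma coords_vec_at_R: "I \<in> R \<Longrightarrow> coords_vec \<alpha> \<beta> I = \<alpha> I + \<beta> I * xi"
proof -
  assume I: "I \<in> R"
  have "coords_vec \<alpha> \<beta> I = (\<Sum>J\<in>R. if J = I then \<alpha> J + \<beta> J * xi else 0)"
    unfolding coords_vec_def by (rule sum.cong) (auto simp: basis_vec_at_R I)
  then show ?thesis using I finite_R by simp
qed

lemma coords_vec_at_compl: "I \<in> R \<Longrightarrow> coords_vec \<alpha> \<beta> (compl I) = C (compl I) * (\<alpha> I - \<beta> I * xi)"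
proof -
  assume I: "I \<in> R"
  have "coords_vec \<alpha> \<beta> (compl I) = (\<Sum>J\<in>R. if J = I then C (compl I) * (\<alpha> J - \<beta> J * xi) else 0)"
    unfolding coords_vec_def
    by (rule sum.cong) (auto simp: basis_vec_at_compl I cnj_xi algebra_simps)
  then show ?thesis using I finite_R by simp
qed

lemma coords_vec_outside: "I \<notin> WI \<Longrightarrow> coords_vec \<alpha> \<beta> I = 0"
  unfolding coords_vec_def by (simp add: basis_vec_outside)

lemma coords_vec_cong:
  "(\<And>J. J \<in> R \<Longrightarrow> \<alpha> J = \<alpha>' J \<and> \<beta> J = \<beta>' J) \<Longrightarrow> coords_vec \<alpha> \<beta> = coords_vec \<alpha>' \<beta>'"
  unfolding coords_vec_def by (intro ext sum.cong) auto

lemma inj_on_basis_vec: "inj_on basis_vec (R \<times> UNIV)"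
proof (rule inj_onI, clarify)
  fix J b J' b' assume J: "J \<in> R" "J' \<in> R" and eq: "basis_vec (J,b) = basis_vec (J',b')"
  have "xi \<noteq> 1" using Re_xi by auto
  moreover have "basis_vec (J,b) J = basis_vec (J',b') J" using eq by simp
  ultimately show "J = J' \<and> b = b'"
    using J xi_nonzero by (auto simp: basis_vec_at_R split: if_splits)
qed

lemma lincomb_B: "(\<lambda>I. \<Sum>b\<in>B. c b * b I) = coords_vec (\<lambda>J. c (basis_vec (J,True))) (\<lambda>J. c (basis_vec (J,False)))"
proof
  fix I
  have "(\<Sum>b\<in>B. c b * b I) = (\<Sum>x\<in>R \<times> UNIV. c (basis_vec x) * basis_vec x I)"
    unfolding B_def by (rule sum.reindex[OF inj_on_basis_vec, unfolded comp_def])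
  also have "\<dots> = (\<Sum>J\<in>R. \<Sum>b\<in>UNIV. c (basis_vec (J,b)) * basis_vec (J,b) I)"
    by (rule sum.cartesian_product')
  finally show "(\<Sum>b\<in>B. c b * b I) = coords_vec (\<lambda>J. c (basis_vec (J,True))) (\<lambda>J. c (basis_vec (J,False))) I"
    by (simp add: coords_vec_def UNIV_bool add.commute)
qed

lemma finite_B: "finite B"
  unfolding B_def using finite_R by simp

lemma vspan_over_B: "vspan_over K B = {coords_vec \<alpha> \<beta> | \<alpha> \<beta>. \<forall>J\<in>R. \<alpha> J \<in> K \<and> \<beta> J \<in> K}"
proof (intro Set.set_eqI iffI)
  fix v assume "v \<in> vspan_over K B"
  then obtain c where c: "\<forall>b\<in>B. c b \<in> K" "v = (\<lambda>I. \<Sum>b\<in>B. c b * b I)"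
    by (auto simp: vspan_over_def)
  then have "v = coords_vec (\<lambda>J. c (basis_vec (J,True))) (\<lambda>J. c (basis_vec (J,False)))"
    using lincomb_B by simp
  moreover have "\<forall>J\<in>R. c (basis_vec (J,True)) \<in> K \<and> c (basis_vec (J,False)) \<in> K"
    using c(1) unfolding B_def by blast
  ultimately show "v \<in> {coords_vec \<alpha> \<beta> | \<alpha> \<beta>. \<forall>J\<in>R. \<alpha> J \<in> K \<and> \<beta> J \<in> K}"
    by blast
next
  fix v assume "v \<in> {coords_vec \<alpha> \<beta> | \<alpha> \<beta>. \<forall>J\<in>R. \<alpha> J \<in> K \<and> \<beta> J \<in> K}"
  then obtain \<alpha> \<beta> where coords: "\<forall>J\<in>R. \<alpha> J \<in> K \<and> \<beta> J \<in> K" and v: "v = coords_vec \<alpha> \<beta>"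
    by blast
  define c where "c b = (case inv_into (R \<times> UNIV) basis_vec b of (J,b0) \<Rightarrow> if b0 then \<alpha> J else \<beta> J)" for b
  have c: "c (basis_vec (J,b0)) = (if b0 then \<alpha> J else \<beta> J)" if "J \<in> R" for J b0
    unfolding c_def using inv_into_f_f[OF inj_on_basis_vec, of "(J,b0)"] that by simp
  have "(\<lambda>I. \<Sum>b\<in>B. c b * b I) = v"
    unfolding lincomb_B v by (rule coords_vec_cong) (simp add: c)
  moreover have "\<forall>b\<in>B. c b \<in> K" unfolding B_def using c coords by auto
  ultimately show "v \<in> vspan_over K B" unfolding vspan_over_def by auto
qed

lemma coords_vec_eq_0:
  assumes "coords_vec \<alpha> \<beta> = (\<lambda>I. 0)" "J \<in> R"
  shows "\<alpha> J = 0 \<and> \<beta> J = 0"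
proof -
  have "\<alpha> J + \<beta> J * xi = 0" using assms coords_vec_at_R by metis
  moreover have "\<alpha> J - \<beta> J * xi = 0"
    using assms coords_vec_at_compl C_nonzero[OF compl_in_WI] R_sub_WI by (metis mult_eq_0_iff subsetD)
  ultimately show ?thesis using xi_nonzero by (simp add: algebra_simps)
qed

lemma vindep_over_B: "vindep_over K B"
  unfolding vindep_over_def
proof (intro allI impI ballI)
  fix c b assume "(\<forall>b\<in>B. c b \<in> K) \<and> (\<lambda>I. \<Sum>b\<in>B. c b * b I) = (\<lambda>I. 0)" and b: "b \<in> B"
  then have zero: "coords_vec (\<lambda>J. c (basis_vec (J,True))) (\<lambda>J. c (basis_vec (J,False))) = (\<lambda>I. 0)"
    using lincomb_B by simp
  obtain J b0 where "J \<in> R" "b = basis_vec (J,b0)" using b unfolding B_def by auto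
  then show "c b = 0" using coords_vec_eq_0[OF zero] by (cases b0) auto
qed

lemma coords_vec_in_wedge_space:
  assumes "\<forall>J\<in>R. \<alpha> J \<in> E \<and> \<beta> J \<in> E"
  shows "coords_vec \<alpha> \<beta> \<in> wedge_space E m k"
proof -
  have unit: "(if b then 1 else xi) \<in> E" for b
    using xi_in_E subfield_C_one[OF subfield_E] by simp
  have "basis_vec (J,b) I \<in> E" for J b I
    using unit[of b] subfield_C_zero[OF subfield_E]
      subfield_C_mult[OF subfield_E subsetD[OF E0_sub_E C_in_E0] cnj_in_E[OF unit[of b]]]
    by (simp add: basis_vec_def)
  then show ?thesis
    unfolding wedge_space_def using assms coords_vec_outside
    by (auto simp: coords_vec_def intro!: subfield_C_sum[OF subfield_E] subfield_C_add[OF subfield_E]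
        subfield_C_mult[OF subfield_E])
qed

lemma vspan_over_E_B: "vspan_over E B = wedge_space E m k"
proof
  show "vspan_over E B \<subseteq> wedge_space E m k"
    unfolding vspan_over_B using coords_vec_in_wedge_space by blast
next
  show "wedge_space E m k \<subseteq> vspan_over E B"
  proof
    fix v assume v: "v \<in> wedge_space E m k"
    define \<alpha> where "\<alpha> J = (v J + v (compl J) * C J) / 2" for J
    define \<beta> where "\<beta> J = (v J - v (compl J) * C J) / (2 * xi)" for J
    have "\<alpha> J \<in> E \<and> \<beta> J \<in> E" for J
      unfolding \<alpha>_def \<beta>_def using v C_in_E0 E0_sub_E xi_in_E
      by (auto simp: wedge_space_def intro!: subfield_C_divide[OF subfield_E] subfield_C_add[OF subfield_E]
          subfield_C_diff[OF subfield_E] subfield_C_mult[OF subfield_E] subfield_C_two[OF subfield_E])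
    moreover have "coords_vec \<alpha> \<beta> = v"
    proof (rule wedge_vec_eqI)
      fix J assume J: "J \<in> R"
      show "coords_vec \<alpha> \<beta> J = v J"
        using xi_nonzero by (simp add: coords_vec_at_R J \<alpha>_def \<beta>_def field_simps)
      have "coords_vec \<alpha> \<beta> (compl J) = v (compl J) * (C J * C (compl J))"
        using xi_nonzero by (simp add: coords_vec_at_compl J \<alpha>_def \<beta>_def field_simps)
      then show "coords_vec \<alpha> \<beta> (compl J) = v (compl J)"
        using C_mult_compl J R_sub_WI by auto
    qed (use v coords_vec_outside in \<open>auto simp: wedge_space_def\<close>)
    ultimately show "v \<in> vspan_over E B" unfolding vspan_over_B by blast
  qed
qed

lemma tau_at_WI: "I \<in> WI \<Longrightarrow> tau v I = C I * cnj (v (compl I))"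
  and tau_outside: "I \<notin> WI \<Longrightarrow> tau v I = 0"
  by (simp_all add: tau_def)

lemma tau_coords_vec:
  assumes coords: "\<forall>J\<in>R. \<alpha> J \<in> E0 \<and> \<beta> J \<in> E0"
  shows "tau (coords_vec \<alpha> \<beta>) = coords_vec \<alpha> \<beta>"
proof (rule wedge_vec_eqI)
  fix J assume J: "J \<in> R"
  then have JW: "J \<in> WI" and real: "cnj (\<alpha> J) = \<alpha> J" "cnj (\<beta> J) = \<beta> J"
    using R_sub_WI coords cnj_E0 by auto
  have "tau (coords_vec \<alpha> \<beta>) J = (C J * C (compl J)) * (\<alpha> J + \<beta> J * xi)"
    using C_in_E0[of "compl J"] by (simp add: tau_at_WI JW coords_vec_at_compl J real cnj_xi cnj_E0)
  then show "tau (coords_vec \<alpha> \<beta>) J = coords_vec \<alpha> \<beta> J"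
    by (simp add: C_mult_compl JW coords_vec_at_R J)
  show "tau (coords_vec \<alpha> \<beta>) (compl J) = coords_vec \<alpha> \<beta> (compl J)"
    by (simp add: tau_at_WI compl_in_WI JW compl_compl coords_vec_at_R coords_vec_at_compl J real cnj_xi)
qed (simp_all add: tau_outside coords_vec_outside)

lemma tau_fixed_imp_coords_vec:
  assumes v: "v \<in> wedge_space E m k" and fixed: "tau v = v"
  obtains \<alpha> \<beta> where "\<forall>J\<in>R. \<alpha> J \<in> E0 \<and> \<beta> J \<in> E0" "v = coords_vec \<alpha> \<beta>"
proof -
  have "\<forall>J. \<exists>\<alpha>\<in>E0. \<exists>\<beta>\<in>E0. v J = \<alpha> + \<beta> * xi"
    using E_decompose v unfolding wedge_space_def by blast
  then obtain \<alpha> \<beta> where coords: "\<And>J. \<alpha> J \<in> E0 \<and> \<beta> J \<in> E0 \<and> v J = \<alpha> J + \<beta> J * xi"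
    by metis
  have "coords_vec \<alpha> \<beta> = v"
  proof (rule wedge_vec_eqI)
    fix J assume J: "J \<in> R"
    then have JW: "J \<in> WI" using R_sub_WI by auto
    show "coords_vec \<alpha> \<beta> J = v J" by (simp add: coords_vec_at_R J coords)
    have "v (compl J) = tau v (compl J)" using fixed by simp
    also have "\<dots> = C (compl J) * (\<alpha> J - \<beta> J * xi)"
      using coords[of J] by (simp add: tau_at_WI compl_in_WI JW compl_compl cnj_E0 cnj_xi)
    finally show "coords_vec \<alpha> \<beta> (compl J) = v (compl J)" by (simp add: coords_vec_at_compl J)
  qed (use v coords_vec_outside in \<open>auto simp: wedge_space_def\<close>)
  then show ?thesis using coords that[of \<alpha> \<beta>] by blast
qed

lemma vspan_over_E0_B: "vspan_over E0 B = {v \<in> wedge_space E m k. tau v = v}"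
proof (intro Set.set_eqI iffI)
  fix v assume "v \<in> vspan_over E0 B"
  then obtain \<alpha> \<beta> where coords: "\<forall>J\<in>R. \<alpha> J \<in> E0 \<and> \<beta> J \<in> E0" and v: "v = coords_vec \<alpha> \<beta>"
    unfolding vspan_over_B by blast
  then show "v \<in> {v \<in> wedge_space E m k. tau v = v}"
    using E0_sub_E tau_coords_vec by (auto intro!: coords_vec_in_wedge_space)
next
  fix v assume "v \<in> {v \<in> wedge_space E m k. tau v = v}"
  then obtain \<alpha> \<beta> where "\<forall>J\<in>R. \<alpha> J \<in> E0 \<and> \<beta> J \<in> E0" "v = coords_vec \<alpha> \<beta>"
    using tau_fixed_imp_coords_vec by blast
  then show "v \<in> vspan_over E0 B" unfolding vspan_over_B by blast
qed

lemma det_submatrix_in_E: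
  assumes g: "g \<in> SU_points E m (diag_mat_of m a)" and I: "I \<in> WI" and J: "J \<in> WI"
  shows "det (submatrix g I J) \<in> E"
proof -
  have gc: "g \<in> carrier_mat m m" and entries: "\<And>i j. i < m \<Longrightarrow> j < m \<Longrightarrow> g $$ (i,j) \<in> E"
    using g by (auto simp: SU_points_def)
  have sub: "submatrix g I J \<in> carrier_mat k k"
    using carrier_submatrix[OF gc WI_sub[OF I] WI_sub[OF J]] WI_card[OF I] WI_card[OF J] by simp
  show ?thesis
  proof (rule subfield_C_det[OF subfield_E sub])
    fix i j assume i: "i < k" and j: "j < k"
    have "pick I i \<in> I" "pick J j \<in> J"
      using pick_in_set[of i I] pick_in_set[of j J] i j WI_card[OF I] WI_card[OF J] by auto
    moreover have "submatrix g I J $$ (i,j) = g $$ (pick I i, pick J j)"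
      by (rule submatrix_index)
         (use gc i j WI_sub[OF I] WI_sub[OF J] WI_card[OF I] WI_card[OF J] in \<open>auto simp: bounded_Collect_eq\<close>)
    ultimately show "submatrix g I J $$ (i,j) \<in> E" using entries WI_sub[OF I] WI_sub[OF J] by auto
  qed
qed

lemma wedge_act_in_wedge_space:
  assumes "g \<in> SU_points E m (diag_mat_of m a)" "v \<in> wedge_space E m k"
  shows "wedge_act m k g v \<in> wedge_space E m k"
  unfolding wedge_space_def wedge_act_def using assms det_submatrix_in_E
  by (auto intro!: subfield_C_sum[OF subfield_E] subfield_C_mult[OF subfield_E]
      subfield_C_zero[OF subfield_E] simp: wedge_space_def)

lemma det_submatrix_mult_C:
  assumes g: "g \<in> SU_points E m (diag_mat_of m a)" and I: "I \<in> WI" and J: "J \<in> WI"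
  shows "det (submatrix g I J) * C J = C I * cnj (det (submatrix g (compl I) (compl J)))"
  using diag_unitary_minor_identity[OF _ _ a_nonzero _ WI_sub[OF I] WI_card[OF I] WI_sub[OF J] WI_card[OF J]]
    g t_nonzero
  by (auto simp: SU_points_def C_def field_simps)

lemma tau_wedge_act:
  assumes g: "g \<in> SU_points E m (diag_mat_of m a)"
  shows "tau (wedge_act m k g v) = wedge_act m k g (tau v)"
proof
  fix I
  show "tau (wedge_act m k g v) I = wedge_act m k g (tau v) I"
  proof (cases "I \<in> WI")
    case True
    have "tau (wedge_act m k g v) I = (\<Sum>J\<in>WI. C I * cnj (det (submatrix g (compl I) J)) * cnj (v J))"
      using True compl_in_WI by (simp add: tau_def wedge_act_def cnj_sum sum_distrib_left mult.assoc)
    also have "\<dots> = (\<Sum>J\<in>WI. C I * cnj (det (submatrix g (compl I) (compl J))) * cnj (v (compl J)))"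
      using sum.reindex_bij_betw[of compl WI WI] compl_in_WI compl_compl
      by (intro sum.reindex_bij_witness[of _ compl compl]) auto
    also have "\<dots> = (\<Sum>J\<in>WI. det (submatrix g I J) * (C J * cnj (v (compl J))))"
      by (rule sum.cong[OF refl]) (simp add: det_submatrix_mult_C[OF g True] mult.assoc[symmetric])
    also have "\<dots> = wedge_act m k g (tau v) I"
      using True by (simp add: wedge_act_def tau_def)
    finally show ?thesis .
  qed (simp add: tau_def wedge_act_def)
qed

theorem wedge_descends:
  "\<exists>W0 B. W0 \<subseteq> wedge_space E m k
     \<and> (\<forall>g\<in>SU_points E m (diag_mat_of m a). \<forall>w\<in>W0. wedge_act m k g w \<in> W0)
     \<and> finite B \<and> W0 = vspan_over E0 B
     \<and> vindep_over E B \<and> vspan_over E B = wedge_space E m k"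
proof (rule exI[of _ "vspan_over E0 B"], rule exI[of _ B], intro conjI)
  show "\<forall>g\<in>SU_points E m (diag_mat_of m a). \<forall>w\<in>vspan_over E0 B. wedge_act m k g w \<in> vspan_over E0 B"
    unfolding vspan_over_E0_B using tau_wedge_act wedge_act_in_wedge_space by auto
qed (auto simp: vspan_over_E0_B finite_B vindep_over_B vspan_over_E_B)

end

section \<open>Purely imaginary generators of CM fields\<close>

lemma restriction_of_id_in_embeddings: "subfield_C F \<Longrightarrow> (\<lambda>x. if x \<in> F then x else 0) \<in> embeddings F"
  unfolding embeddings_def using subfield_C_one[of F] by (auto intro: subfield_C_add subfield_C_mult)

lemma embedding_zero:
  assumes "\<sigma> \<in> embeddings F" "subfield_C F"
  shows "\<sigma> 0 = 0"
proof -
  have "\<sigma> (0 + 0) = \<sigma> 0 + \<sigma> 0" using assms subfield_C_zero[OF assms(2)] by (auto simp: embeddings_def)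
  then show ?thesis by simp
qed

lemma totally_real_subset_Reals: "subfield_C F \<Longrightarrow> totally_real F \<Longrightarrow> F \<subseteq> \<real>"
proof
  fix x assume F: "subfield_C F" "totally_real F" and x: "x \<in> F"
  have "(\<lambda>x. if x \<in> F then x else 0) \<in> real_embeddings F"
    using restriction_of_id_in_embeddings[OF F(1)] F(2) by (simp add: totally_real_def)
  then show "x \<in> \<real>" using x by (auto simp: real_embeddings_def)
qed

lemma CM_field_not_subset_Reals: "CM_field E \<Longrightarrow> \<not> E \<subseteq> \<real>"
proof
  assume CM: "CM_field E" and "E \<subseteq> \<real>"
  then have "(\<lambda>x. if x \<in> E then x else 0) \<in> real_embeddings E"
    using restriction_of_id_in_embeddings[of E]
    by (auto simp: CM_field_def number_field_def real_embeddings_def)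
  then show False using CM by (auto simp: CM_field_def totally_imaginary_def)
qed

lemma ext_degree_two_spanning_pair:
  "ext_degree F E 2 \<Longrightarrow> \<exists>b1 b2. \<forall>x\<in>E. \<exists>f1\<in>F. \<exists>f2\<in>F. x = f1 * b1 + f2 * b2"
proof -
  assume "ext_degree F E 2"
  then obtain B0 where B0: "card B0 = 2" "E = span_over F B0" by (auto simp: ext_degree_def)
  then obtain b1 b2 where "B0 = {b1, b2}" "b1 \<noteq> b2" by (auto simp: card_2_iff)
  then show ?thesis using B0(2) by (auto simp: span_over_def)
qed

text \<open>The coefficients come from inverting the \<open>2\<times>2\<close> matrix expressing \<open>1\<close> and \<open>x\<^sub>0\<close>
  in \<open>b\<^sub>1, b\<^sub>2\<close>.\<close>
lemma decompose_over_one_and: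
  assumes F: "subfield_C F"
    and span: "\<And>x. x \<in> E \<Longrightarrow> \<exists>f1\<in>F. \<exists>f2\<in>F. x = f1 * b1 + f2 * b2"
    and one: "1 \<in> E" and x0: "x0 \<in> E" "x0 \<notin> F" and x: "x \<in> E"
  shows "\<exists>\<alpha>\<in>F. \<exists>\<beta>\<in>F. x = \<alpha> + \<beta> * x0"
proof -
  obtain a1 a2 where a: "a1 \<in> F" "a2 \<in> F" "1 = a1 * b1 + a2 * b2" using span[OF one] by blast
  obtain c1 c2 where c: "c1 \<in> F" "c2 \<in> F" "x0 = c1 * b1 + c2 * b2" using span[OF x0(1)] by blast
  obtain f1 f2 where f: "f1 \<in> F" "f2 \<in> F" "x = f1 * b1 + f2 * b2" using span[OF x] by blast
  define D where "D = a1 * c2 - a2 * c1"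
  have D: "D \<noteq> 0"
  proof
    assume D0: "D = 0"
    have "c1 * 1 - a1 * x0 = c1 * (a1 * b1 + a2 * b2) - a1 * (c1 * b1 + c2 * b2)"
      using a(3) c(3) by simp
    also have "\<dots> = - D * b2" unfolding D_def by (simp add: algebra_simps)
    finally have c1: "c1 = a1 * x0" using D0 by simp
    have "c2 * 1 - a2 * x0 = c2 * (a1 * b1 + a2 * b2) - a2 * (c1 * b1 + c2 * b2)"
      using a(3) c(3) by simp
    also have "\<dots> = D * b1" unfolding D_def by (simp add: algebra_simps)
    finally have c2: "c2 = a2 * x0" using D0 by simp
    have "a1 \<noteq> 0 \<or> a2 \<noteq> 0" using a(3) by auto
    then have "x0 = c1 / a1 \<or> x0 = c2 / a2" using c1 c2 by auto
    then have "x0 \<in> F" using a c subfield_C_divide[OF F] by auto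
    then show False using x0(2) by simp
  qed
  define \<alpha> where "\<alpha> = (f1 * c2 - f2 * c1) / D"
  define \<beta> where "\<beta> = (f2 * a1 - f1 * a2) / D"
  have "(f1 * c2 - f2 * c1) * 1 + (f2 * a1 - f1 * a2) * x0
      = (f1 * c2 - f2 * c1) * (a1 * b1 + a2 * b2) + (f2 * a1 - f1 * a2) * (c1 * b1 + c2 * b2)"
    using a(3) c(3) by simp
  also have "\<dots> = D * x" unfolding D_def f(3) by (simp add: algebra_simps)
  finally have "x = ((f1 * c2 - f2 * c1) * 1 + (f2 * a1 - f1 * a2) * x0) / D"
    using D by (simp add: nonzero_eq_divide_eq mult.commute)
  then have "x = \<alpha> + \<beta> * x0" unfolding \<alpha>_def \<beta>_def by (simp add: add_divide_distrib)
  moreover have "\<alpha> \<in> F" "\<beta> \<in> F" unfolding \<alpha>_def \<beta>_def D_def using f a c F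
    by (auto intro!: subfield_C_divide subfield_C_diff subfield_C_mult)
  ultimately show ?thesis by blast
qed

lemma CM_field_imaginary_generator:
  assumes CM: "CM_field E" and E0: "max_totally_real_subfield E E0"
  shows "\<exists>xi\<in>E. Re xi = 0 \<and> xi \<noteq> 0 \<and> (\<forall>x\<in>E. \<exists>\<alpha>\<in>E0. \<exists>\<beta>\<in>E0. x = \<alpha> + \<beta> * xi)"
proof -
  have sfE: "subfield_C E" using CM by (simp add: CM_field_def number_field_def)
  obtain F where F: "subfield_C F" "F \<subseteq> E" "totally_real F" "ext_degree F E 2"
    using CM by (auto simp: CM_field_def)
  have F_E0: "F \<subseteq> E0" using E0 F by (auto simp: max_totally_real_subfield_def)
  have F_real: "F \<subseteq> \<real>" by (rule totally_real_subset_Reals[OF F(1) F(3)])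
  obtain x0 where x0: "x0 \<in> E" "x0 \<notin> \<real>" using CM_field_not_subset_Reals[OF CM] by auto
  obtain b1 b2 where "\<forall>x\<in>E. \<exists>f1\<in>F. \<exists>f2\<in>F. x = f1 * b1 + f2 * b2"
    using ext_degree_two_spanning_pair[OF F(4)] by blast
  then have decompose: "\<exists>\<alpha>\<in>F. \<exists>\<beta>\<in>F. x = \<alpha> + \<beta> * x0" if "x \<in> E" for x
    using decompose_over_one_and[OF F(1) _ subfield_C_one[OF sfE] x0(1) _ that] x0(2) F_real by blast
  obtain u v where uv: "u \<in> F" "v \<in> F" "x0 * x0 = u + v * x0"
    using decompose[OF subfield_C_mult[OF sfE x0(1) x0(1)]] by blast
  \<comment> \<open>completing the square: \<open>(2x\<^sub>0 - v)\<^sup>2 = 4u + v\<^sup>2\<close> is real, and \<open>2x\<^sub>0 - v\<close> is not\<close>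
  define xi where "xi = 2 * x0 - v"
  have real_uv: "Im u = 0" "Im v = 0" using uv F_real complex_is_Real_iff by auto
  have "xi * xi = 4 * (x0 * x0) - 4 * v * x0 + v * v" unfolding xi_def by (simp add: algebra_simps)
  then have "xi * xi = 4 * u + v * v" using uv(3) by (simp add: algebra_simps)
  then have "Re xi = 0 \<or> Im xi = 0" using real_uv by (auto simp: complex_eq_iff)
  moreover have "Im xi \<noteq> 0" using x0(2) real_uv complex_is_Real_iff by (simp add: xi_def)
  ultimately have "Re xi = 0" "xi \<noteq> 0" by auto
  moreover have "xi \<in> E" unfolding xi_def using x0 uv F(2) subfield_C_two[OF sfE]
    by (auto intro!: subfield_C_diff[OF sfE] subfield_C_mult[OF sfE])
  moreover have "\<exists>\<alpha>\<in>E0. \<exists>\<beta>\<in>E0. x = \<alpha> + \<beta> * xi" if x: "x \<in> E" for x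
  proof -
    obtain \<alpha> \<beta> where \<alpha>\<beta>: "\<alpha> \<in> F" "\<beta> \<in> F" "x = \<alpha> + \<beta> * x0" using decompose[OF x] by blast
    have "x = (\<alpha> + \<beta> * v / 2) + (\<beta> / 2) * xi" unfolding xi_def \<alpha>\<beta>(3) by (simp add: field_simps)
    moreover have "\<alpha> + \<beta> * v / 2 \<in> F" "\<beta> / 2 \<in> F" using \<alpha>\<beta> uv subfield_C_two[OF F(1)]
      by (auto intro!: subfield_C_add[OF F(1)] subfield_C_divide[OF F(1)] subfield_C_mult[OF F(1)])
    ultimately show ?thesis using F_E0 by blast
  qed
  ultimately show ?thesis by blast
qed

section \<open>The diagonal entries of \<open>h\<close>\<close>

lemma double_minus_mod_2:
  assumes "(p::nat) \<le> n" "p mod 2 = n mod 2"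
  shows "(2*n - p) mod 2 = n mod 2"
proof -
  obtain r where "n = p + r" using le_Suc_ex assms(1) by blast
  then have "2*n - p = p + 2*r" by simp
  then show ?thesis using assms(2) by simp
qed

lemma ext_degree_ge_1: "ext_degree K V d \<Longrightarrow> 1 \<in> V \<Longrightarrow> d \<ge> 1"
  by (cases "d = 0") (auto simp: ext_degree_def span_over_def)

lemma herm_entry_in_E0:
  assumes E0: "subfield_C E0" and \<delta>: "\<And>j. j \<in> {1..d} \<Longrightarrow> \<delta> j \<in> E0 \<and> \<delta> j \<noteq> 0"
  shows "herm_entry d q \<delta> s \<in> E0 \<and> herm_entry d q \<delta> s \<noteq> 0"
proof -
  define i where "i = card {j\<in>{1..d}. q j \<le> s}"
  have entry: "herm_entry d q \<delta> s =
      (if i = 0 then -1 else if i \<ge> d then 1 else (-1) ^ (i - 1) * (\<Prod>j=1..i. \<delta> j))"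
    by (simp add: herm_entry_def i_def Let_def)
  have minus_one: "-1 \<in> E0" using subfield_C_uminus[OF E0 subfield_C_one[OF E0]] .
  show ?thesis
  proof (cases "i = 0 \<or> i \<ge> d")
    case True
    then show ?thesis using minus_one subfield_C_one[OF E0] entry by auto
  next
    case False
    then have "\<delta> j \<in> E0 \<and> \<delta> j \<noteq> 0" if "j \<in> {1..i}" for j using \<delta> that by auto
    then have "(\<Prod>j=1..i. \<delta> j) \<in> E0" "(\<Prod>j=1..i. \<delta> j) \<noteq> 0"
      by (auto intro!: subfield_C_prod[OF E0])
    then show ?thesis using False entry subfield_C_power[OF E0 minus_one]
      by (auto intro: subfield_C_mult[OF E0])
  qed
qed

lemma herm_entry_below:
  "(\<And>j. j \<in> {1..d} \<Longrightarrow> n \<le> q j) \<Longrightarrow> s < n \<Longrightarrow> herm_entry d q \<delta> s = -1"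
proof -
  assume "\<And>j. j \<in> {1..d} \<Longrightarrow> n \<le> q j" "s < n"
  then have "{j\<in>{1..d}. q j \<le> s} = {}" by fastforce
  then show ?thesis by (simp add: herm_entry_def)
qed

lemma herm_entry_last:
  "d \<ge> 1 \<Longrightarrow> (\<And>j. j \<in> {1..d} \<Longrightarrow> q j < m) \<Longrightarrow> herm_entry d q \<delta> (m - 1) = 1"
proof -
  assume "d \<ge> 1" "\<And>j. j \<in> {1..d} \<Longrightarrow> q j < m"
  moreover from this have "{j\<in>{1..d}. q j \<le> m - 1} = {1..d}" by fastforce
  ultimately show ?thesis by (simp add: herm_entry_def)
qed

text \<open>No \<open>q\<^sub>j\<close> is congruent to \<open>n + 1\<close>, so the block index does not change between positions
  \<open>n + 2i\<close> and \<open>n + 2i + 1\<close>.\<close>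
lemma herm_entry_pair:
  assumes "\<And>j. j \<in> {1..d} \<Longrightarrow> q j mod 2 = n mod 2"
  shows "herm_entry d q \<delta> (n + 2*i) = herm_entry d q \<delta> (Suc (n + 2*i))"
proof -
  have "q j \<noteq> Suc (n + 2*i)" if "j \<in> {1..d}" for j
    using assms[OF that] by (auto simp: mod_Suc split: if_splits)
  then have blocks: "{j\<in>{1..d}. q j \<le> n + 2*i} = {j\<in>{1..d}. q j \<le> Suc (n + 2*i)}"
    by (auto simp: le_Suc_eq)
  show ?thesis unfolding herm_entry_def blocks ..
qed

lemma prod_equal_pairs_square:
  assumes F: "subfield_C F" and f: "\<And>s. f s \<in> F"
    and pairs: "\<And>i. i < r \<Longrightarrow> f (n + 2*i) = f (Suc (n + 2*i))"
  shows "\<exists>t\<in>F. (\<Prod>s\<in>{n..<n+2*r}. f s) = t^2"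
  using pairs
proof (induction r)
  case 0
  then show ?case using subfield_C_one[OF F] by (intro bexI[of _ 1]) auto
next
  case (Suc r)
  then obtain t where t: "t \<in> F" "(\<Prod>s\<in>{n..<n+2*r}. f s) = t^2" by auto
  have "{n..<n+2*Suc r} = insert (Suc (n+2*r)) (insert (n+2*r) {n..<n+2*r})" by auto
  then have "(\<Prod>s\<in>{n..<n+2*Suc r}. f s) = f (Suc (n+2*r)) * (f (n+2*r) * t^2)" using t(2) by simp
  also have "\<dots> = (t * f (n+2*r))^2" using Suc.prems[of r] by (simp add: power2_eq_square algebra_simps)
  finally show ?case using t(1) f F by (intro bexI[of _ "t * f (n+2*r)"]) (auto intro: subfield_C_mult)
qed

lemma herm_entry_signed_prod_square:
  assumes E0: "subfield_C E0" and n: "n \<ge> 1" and d: "d \<ge> 1"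
    and q: "\<And>j. j \<in> {1..d} \<Longrightarrow> n \<le> q j \<and> q j < 2*n \<and> q j mod 2 = n mod 2"
    and \<delta>: "\<And>j. j \<in> {1..d} \<Longrightarrow> \<delta> j \<in> E0 \<and> \<delta> j \<noteq> 0"
  shows "\<exists>t\<in>E0. t \<noteq> 0 \<and> (-1)^n * (\<Prod>s<n+n. herm_entry d q \<delta> s) = t^2"
proof -
  let ?a = "herm_entry d q \<delta>"
  have a: "?a s \<in> E0" "?a s \<noteq> 0" for s using herm_entry_in_E0[OF E0 \<delta>] by auto
  have pairs: "?a (n + 2*i) = ?a (Suc (n + 2*i))" for i
    by (rule herm_entry_pair) (use q in blast)
  obtain t where t: "t \<in> E0" "(\<Prod>s\<in>{n..<n+2*(n div 2)}. ?a s) = t^2"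
    using prod_equal_pairs_square[OF E0 a(1) pairs] by blast
  \<comment> \<open>for odd \<open>n\<close> the unpaired last entry is \<open>1\<close>\<close>
  have upper: "(\<Prod>s\<in>{n..<n+n}. ?a s) = t^2"
  proof (cases "even n")
    case False
    then have "n + 2*(n div 2) = 2*n - 1" using odd_two_times_div_two_nat[of n] n by simp
    moreover have "{n..<n+n} = insert (2*n-1) {n..<2*n-1}" using n by auto
    ultimately show ?thesis using t herm_entry_last[OF d, of q "2*n" \<delta>] q by simp
  qed (use t in simp)
  have "(\<Prod>s<n+n. ?a s) = (\<Prod>s<n. ?a s) * (\<Prod>s\<in>{n..<n+n}. ?a s)"
    using prod.atLeastLessThan_concat[of 0 n "n+n" ?a] by (simp add: lessThan_atLeast0)
  also have "(\<Prod>s<n. ?a s) = (-1)^n" using herm_entry_below[of d n q _ \<delta>] q by simp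
  finally have "(-1)^n * (\<Prod>s<n+n. ?a s) = t^2" using upper by (simp add: power_add[symmetric])
  moreover have "t \<noteq> 0"
  proof -
    have "(\<Prod>s\<in>{n..<n+n}. ?a s) \<noteq> 0" using a(2) by simp
    then show ?thesis using upper by auto
  qed
  ultimately show ?thesis using t(1) by blast
qed

theorem lemma3p5:
  fixes n d :: nat and E E0 :: "complex set"
    and \<sigma> :: "nat \<Rightarrow> complex \<Rightarrow> complex" and p q :: "nat \<Rightarrow> nat"
    and \<delta> :: "nat \<Rightarrow> complex"
  assumes "n \<ge> 1"
    and "CM_field E" and "max_totally_real_subfield E E0"
    and "ext_degree \<rat> E0 d"
    and "bij_betw \<sigma> {1..d} (real_embeddings E0)"
    and "p 1 = n"
    and "\<And>i. i \<in> {2..d} \<Longrightarrow> 0 < p i \<and> p i < n"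
    and "\<And>i. i \<in> {1..d} \<Longrightarrow> p i mod 2 = n mod 2"
    and "\<And>i j. i \<in> {1..d} \<Longrightarrow> j \<in> {1..d} \<Longrightarrow> i \<le> j \<Longrightarrow> p j \<le> p i"
    and "\<And>i. q i = 2 * n - p i"
    and "\<And>i. i \<in> {1..d} \<Longrightarrow> \<delta> i \<in> E0"
    and "\<And>i. i \<in> {1..d} \<Longrightarrow> Re (\<sigma> i (\<delta> i)) > 0"
    and "\<And>i j. i \<in> {1..d} \<Longrightarrow> j \<in> {1..d} \<Longrightarrow> i \<noteq> j \<Longrightarrow> Re (\<sigma> i (\<delta> j)) < 0"
  shows "\<exists>W0 B. W0 \<subseteq> wedge_space E (2*n) n
     \<and> (\<forall>g\<in>SU_points E (2*n) (herm_matrix n d q \<delta>). \<forall>w\<in>W0. wedge_act (2*n) n g w \<in> W0)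
     \<and> finite B \<and> W0 = vspan_over E0 B
     \<and> vindep_over E B \<and> vspan_over E B = wedge_space E (2*n) n"
proof -
  have E: "subfield_C E" using assms(2) by (simp add: CM_field_def number_field_def)
  have E0: "subfield_C E0" "E0 \<subseteq> E" "totally_real E0"
    using assms(3) by (auto simp: max_totally_real_subfield_def)
  have E0_real: "E0 \<subseteq> \<real>" by (rule totally_real_subset_Reals[OF E0(1,3)])
  obtain xi where xi: "xi \<in> E" "Re xi = 0" "xi \<noteq> 0" "\<forall>x\<in>E. \<exists>\<alpha>\<in>E0. \<exists>\<beta>\<in>E0. x = \<alpha> + \<beta> * xi"
    using CM_field_imaginary_generator[OF assms(2,3)] by blast
  have d: "d \<ge> 1" using ext_degree_ge_1[OF assms(4) subfield_C_one[OF E0(1)]] .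
  have q_bounds: "n \<le> q j \<and> q j < 2*n \<and> q j mod 2 = n mod 2" if j: "j \<in> {1..d}" for j
  proof -
    have p: "0 < p j" "p j \<le> n" using assms(1,6) assms(7)[of j] j by (cases "j = 1", auto)+
    then show ?thesis using double_minus_mod_2[OF p(2) assms(8)[OF j]] assms(10)[of j] by auto
  qed
  have \<delta>_nonzero: "\<delta> j \<in> E0 \<and> \<delta> j \<noteq> 0" if j: "j \<in> {1..d}" for j
  proof -
    have "\<sigma> j \<in> embeddings E0" using assms(5) j by (auto simp: bij_betw_def real_embeddings_def)
    then have "\<sigma> j 0 = 0" using embedding_zero E0(1) by blast
    then show ?thesis using assms(11,12)[OF j] by auto
  qed
  obtain t where t: "t \<in> E0" "t \<noteq> 0" "(-1)^n * (\<Prod>s<n+n. herm_entry d q \<delta> s) = t^2"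
    using herm_entry_signed_prod_square[of E0 n d q \<delta>, OF E0(1) assms(1) d q_bounds \<delta>_nonzero] by blast
  interpret wedge_descent E E0 xi n "herm_entry d q \<delta>" t
    by unfold_locales
      (use E E0 E0_real xi assms(1) herm_entry_in_E0[OF E0(1) \<delta>_nonzero] t in auto)
  have H: "herm_matrix n d q \<delta> = diag_mat_of (n+n) (herm_entry d q \<delta>)"
    by (simp add: herm_matrix_def diag_mat_of_def mult_2)
  show ?thesis using wedge_descends unfolding H mult_2 .
qed

end
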